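(* Let $d\ge2$ and $x,y,u,v\in\mathbb{R}^d_{>0}$. Then there exist $x',y',u',v'\in\mathbb{R}^2_{>0}$ such that \[ s^\pm(x',y')=s^\pm(x,y),\qquad s^\pm(u',v')=s^\pm(u,v),\qquad F_2(x',y';u',v')\ge F_d(x,y;u,v). \]
   Context: For $x,y\in\mathbb{R}^d_{>0}$ define $s^+(x,y)=\max_i \frac{y_i}{x_i}$ and $s^-(x,y)=\min_i\frac{y_i}{x_i}$. Define $F_d:(\mathbb{R}^d_{>0})^4\to\mathbb{R}_{>0}$ by $F_d(x,y;u,v)=\frac{(x\cdot u)(y\cdot v)}{(x\cdot v)(y\cdot u)}$, where $\cdot$ is the standard Euclidean dot product; $F_2$ is the case $d=2$. *)

theory Defs
  imports "HOL-Analysis.Analysis"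
begin

definition pos_vec :: "real ^ 'n \<Rightarrow> bool" where
  "pos_vec x \<longleftrightarrow> (\<forall>i. x $ i > 0)"

definition s_plus :: "real ^ 'n \<Rightarrow> real ^ 'n \<Rightarrow> real" where
  "s_plus x y = Max (range (\<lambda>i. y $ i / x $ i))"

definition s_minus :: "real ^ 'n \<Rightarrow> real ^ 'n \<Rightarrow> real" where
  "s_minus x y = Min (range (\<lambda>i. y $ i / x $ i))"

definition F_cr :: "real ^ 'n \<Rightarrow> real ^ 'n \<Rightarrow> real ^ 'n \<Rightarrow> real ^ 'n \<Rightarrow> real" where
  "F_cr x y u v = ((x \<bullet> u) * (y \<bullet> v)) / ((x \<bullet> v) * (y \<bullet> u))"

end

theory Submission
  imports Defs
begin

(* Write m = s^-(x,y), M = s^+(x,y), m' = s^-(u,v), M' = s^+(u,v) and normalise by W = x.u: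
   A = y.u/W lies in [m,M], B = x.v/W in [m',M'], and F_d = N/(A B) with N = y.v/W.
   The nonnegative inner products (M x - y).(v - m' u) and (y - m x).(M' u - v) give
   N <= A B + (M - A)(B - m') and N <= A B + (A - m)(M' - B), and nothing else about the
   d-dimensional data is needed.  In the plane, x' = (1,1), y' = (m,M), u' = (p,1-p),
   v' = (p m', (1-p) M') have the prescribed extremal ratios, and their cross ratio exceeds 1
   by p(1-p)(M-m)(M'-m')/(A_p B_p), where A_p = p m + (1-p) M and B_p = p m' + (1-p) M'.
   Choosing p with A_p = A and B_p >= B (or symmetrically B_p = B and A_p >= A, one of the
   two is always possible) makes this excess dominate the bound on N/(A B) - 1. *)

definition F_two_point :: "real \<Rightarrow> real \<Rightarrow> real \<Rightarrow> real \<Rightarrow> real \<Rightarrow> real" where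
  "F_two_point m M m' M' p =
     (p*m*m' + (1-p)*M*M') / ((p*m + (1-p)*M) * (p*m' + (1-p)*M'))"

lemma F_two_point_sym: "F_two_point m M m' M' p = F_two_point m' M' m M p"
  unfolding F_two_point_def by (simp add: algebra_simps)

lemma F_two_point_eq:
  assumes "p*m + (1-p)*M \<noteq> 0" "p*m' + (1-p)*M' \<noteq> 0"
  shows "F_two_point m M m' M' p =
           1 + p*(1-p)*((M-m)*(M'-m')) / ((p*m + (1-p)*M) * (p*m' + (1-p)*M'))"
proof -
  have "p*m*m' + (1-p)*M*M' =
          (p*m + (1-p)*M) * (p*m' + (1-p)*M') + p*(1-p)*((M-m)*(M'-m'))"
    by (simp add: algebra_simps)
  with assms show ?thesis
    unfolding F_two_point_def by (simp add: add_divide_distrib)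
qed

lemma F_two_point_ge_1:
  assumes "0 < m" "m \<le> M" "0 < m'" "m' \<le> M'" "0 \<le> p" "p \<le> 1"
  shows "1 \<le> F_two_point m M m' M' p"
proof -
  have "0 \<le> (1-p)*(M-m)" "0 \<le> (1-p)*(M'-m')"
    using assms by simp_all
  then have "m \<le> p*m + (1-p)*M" "m' \<le> p*m' + (1-p)*M'"
    by (simp_all add: algebra_simps)
  with assms show ?thesis
    by (simp add: F_two_point_eq)
qed

lemma le_F_two_point_matching:
  assumes "0 < m" "m \<le> M" "0 \<le> m'" "0 < B" "0 < p" "p < 1"
    and A: "A = p*m + (1-p)*M" and B: "B \<le> p*m' + (1-p)*M'"
    and N: "N \<le> A*B + (M-A)*(B-m')"
  shows "N / (A*B) \<le> F_two_point m M m' M' p"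
proof -
  define B\<^sub>p where "B\<^sub>p = p*m' + (1-p)*M'"
  have "0 \<le> (1-p)*(M-m)" using assms by simp
  then have "0 < A" using A \<open>0 < m\<close> by (simp add: algebra_simps)
  have "0 < B\<^sub>p" using B \<open>0 < B\<close> unfolding B\<^sub>p_def by linarith
  have MA: "M - A = p*(M-m)" using A by (simp add: algebra_simps)
  have "m'/B\<^sub>p \<le> m'/B"
    using B \<open>0 < B\<close> \<open>0 \<le> m'\<close> unfolding B\<^sub>p_def by (intro divide_left_mono) auto
  then have "(B-m')/B \<le> (B\<^sub>p-m')/B\<^sub>p"
    using \<open>0 < B\<close> \<open>0 < B\<^sub>p\<close> by (simp add: diff_divide_distrib)
  also have "\<dots> = (1-p)*(M'-m') / B\<^sub>p"
    unfolding B\<^sub>p_def by (simp add: algebra_simps)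
  finally have ratio: "(B-m')/B \<le> (1-p)*(M'-m') / B\<^sub>p" .
  have "N / (A*B) \<le> 1 + p*(M-m) * ((B-m')/B) / A"
    using N MA \<open>0 < A\<close> \<open>0 < B\<close> by (simp add: field_simps)
  also have "\<dots> \<le> 1 + p*(M-m) * ((1-p)*(M'-m') / B\<^sub>p) / A"
    using ratio assms \<open>0 < A\<close> by (intro add_left_mono divide_right_mono mult_left_mono) auto
  also have "\<dots> = 1 + p*(1-p)*((M-m)*(M'-m')) / (A*B\<^sub>p)"
    by (simp add: mult_ac)
  also have "\<dots> = F_two_point m M m' M' p"
    using F_two_point_eq[of p m M m' M'] A \<open>0 < A\<close> \<open>0 < B\<^sub>p\<close> unfolding B\<^sub>p_def by simp
  finally show ?thesis .
qed

lemma le_F_two_point: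
  assumes "0 < m" "m \<le> M" "0 < m'" "m' \<le> M'"
    and "A \<in> {m..M}" "B \<in> {m'..M'}"
    and N1: "N \<le> A*B + (M-A)*(B-m')" and N2: "N \<le> A*B + (A-m)*(M'-B)"
  shows "\<exists>p\<in>{0<..<1}. N / (A*B) \<le> F_two_point m M m' M' p"
proof (cases "N \<le> A*B")
  case True
  have "0 < A*B" using assms by simp
  with True have "N / (A*B) \<le> 1" by simp
  also have "1 \<le> F_two_point m M m' M' (1/2)"
    using assms by (intro F_two_point_ge_1) auto
  finally show ?thesis by force
next
  case False
  have "0 < (M-A)*(B-m')" "0 < (A-m)*(M'-B)" using False N1 N2 by linarith+
  moreover have "0 \<le> M-A" "0 \<le> B-m'" "0 \<le> A-m" "0 \<le> M'-B" using assms by auto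
  ultimately have "m < A" "A < M" "m' < B" "B < M'"
    by (metis diff_gt_0_iff_gt le_less mult_zero_left mult_zero_right)+
  define p where "p = (M-A)/(M-m)"
  define q where "q = (M'-B)/(M'-m')"
  have "p*(M-m) = M-A" "q*(M'-m') = M'-B"
    using \<open>m < A\<close> \<open>A < M\<close> \<open>m' < B\<close> \<open>B < M'\<close> unfolding p_def q_def by simp_all
  then have "A = p*m + (1-p)*M" "B = q*m' + (1-q)*M'"
    by (simp_all add: algebra_simps)
  moreover have "0 < p" "p < 1" "0 < q" "q < 1"
    using \<open>m < A\<close> \<open>A < M\<close> \<open>m' < B\<close> \<open>B < M'\<close> unfolding p_def q_def by simp_all
  ultimately have p: "0 < p" "p < 1" "A = p*m + (1-p)*M"
    and q: "0 < q" "q < 1" "B = q*m' + (1-q)*M'"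
    by simp_all
  show ?thesis
  proof (cases "p \<le> q")
    case True
    then have "p*(M'-m') \<le> q*(M'-m')" using assms(4) by (simp add: mult_right_mono)
    then have "B \<le> p*m' + (1-p)*M'" using q(3) by (simp add: algebra_simps)
    then have "N / (A*B) \<le> F_two_point m M m' M' p"
      using assms(3) \<open>m' < B\<close> by (intro le_F_two_point_matching[OF assms(1,2) _ _ p _ N1]) auto
    with p show ?thesis by auto
  next
    case False
    then have "q*(M-m) \<le> p*(M-m)" using assms(2) by (simp add: mult_right_mono)
    then have "A \<le> q*m + (1-q)*M" using p(3) by (simp add: algebra_simps)
    moreover have "N \<le> B*A + (M'-B)*(A-m)" using N2 by (simp add: algebra_simps)
    ultimately have "N / (B*A) \<le> F_two_point m' M' m M q"
      using assms(1) \<open>m < A\<close> by (intro le_F_two_point_matching[OF assms(3,4) _ _ q]) auto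
    with q show ?thesis by (auto simp: F_two_point_sym mult.commute)
  qed
qed

lemma s_minus_le_ratio: "s_minus x y \<le> y $ i / x $ i"
  unfolding s_minus_def by (rule Min_le) auto

lemma ratio_le_s_plus: "y $ i / x $ i \<le> s_plus x y"
  unfolding s_plus_def by (rule Max_ge) auto

lemma s_minus_le_s_plus: "s_minus x y \<le> s_plus x y"
  using s_minus_le_ratio ratio_le_s_plus by (rule order_trans)

lemma s_minus_pos:
  assumes "pos_vec x" "pos_vec y"
  shows "0 < s_minus x y"
proof -
  have "s_minus x y \<in> range (\<lambda>i. y $ i / x $ i)"
    unfolding s_minus_def by (rule Min_in) auto
  with assms show ?thesis
    unfolding pos_vec_def by auto
qed

lemma s_minus_mult_le:
  assumes "pos_vec x"
  shows "s_minus x y * x $ i \<le> y $ i"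
  using s_minus_le_ratio[of x y i] assms by (simp add: pos_vec_def pos_le_divide_eq)

lemma le_s_plus_mult:
  assumes "pos_vec x"
  shows "y $ i \<le> s_plus x y * x $ i"
  using ratio_le_s_plus[of y i x] assms by (simp add: pos_vec_def pos_divide_le_eq)

lemma pos_vec_inner_pos:
  assumes "pos_vec x" "pos_vec y"
  shows "0 < x \<bullet> y"
  using assms unfolding pos_vec_def inner_vec_def by (intro sum_pos) auto

lemma inner_nonneg_componentwise:
  fixes a b :: "real ^ 'n"
  assumes "\<And>i. 0 \<le> a $ i" "\<And>i. 0 \<le> b $ i"
  shows "0 \<le> a \<bullet> b"
  using assms unfolding inner_vec_def by (intro sum_nonneg) simp

lemma F_cr_le_F_two_point:
  fixes x y u v :: "real ^ 'n"
  assumes "pos_vec x" "pos_vec y" "pos_vec u" "pos_vec v"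
  shows "\<exists>p\<in>{0<..<1}.
           F_cr x y u v \<le> F_two_point (s_minus x y) (s_plus x y) (s_minus u v) (s_plus u v) p"
proof -
  define m M m' M' where "m = s_minus x y" "M = s_plus x y" "m' = s_minus u v" "M' = s_plus u v"
  have yx: "\<And>i. m * x $ i \<le> y $ i" "\<And>i. y $ i \<le> M * x $ i"
    and vu: "\<And>i. m' * u $ i \<le> v $ i" "\<And>i. v $ i \<le> M' * u $ i"
    using assms by (simp_all add: m_M_m'_M'_def s_minus_mult_le le_s_plus_mult)
  have pos: "\<And>i. 0 < x $ i" "\<And>i. 0 < u $ i"
    using assms unfolding pos_vec_def by auto
  define W where "W = x \<bullet> u"
  define A B N where "A = y \<bullet> u / W" "B = x \<bullet> v / W" "N = y \<bullet> v / W"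
  have "0 < W" using assms by (simp add: W_def pos_vec_inner_pos)
  have "0 \<le> (y - m *\<^sub>R x) \<bullet> u" "0 \<le> (M *\<^sub>R x - y) \<bullet> u"
    "0 \<le> x \<bullet> (v - m' *\<^sub>R u)" "0 \<le> x \<bullet> (M' *\<^sub>R u - v)"
    using yx vu pos by (intro inner_nonneg_componentwise; simp add: less_imp_le)+
  then have "m \<le> A" "A \<le> M" "m' \<le> B" "B \<le> M'"
    using \<open>0 < W\<close> by (simp_all add: W_def A_B_N_def inner_diff inner_commute field_simps)
  have "0 \<le> (M *\<^sub>R x - y) \<bullet> (v - m' *\<^sub>R u)" "0 \<le> (y - m *\<^sub>R x) \<bullet> (M' *\<^sub>R u - v)"
    using yx vu by (intro inner_nonneg_componentwise; simp)+
  then have "y \<bullet> v \<le> M*(x \<bullet> v) + m'*(y \<bullet> u) - M*m'*W"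
    "y \<bullet> v \<le> M'*(y \<bullet> u) + m*(x \<bullet> v) - M'*m*W"
    by (simp_all add: W_def A_B_N_def inner_diff_left inner_diff_right inner_commute algebra_simps)
  moreover have "A*B + (M-A)*(B-m') = (M*(x \<bullet> v) + m'*(y \<bullet> u) - M*m'*W) / W"
    "A*B + (A-m)*(M'-B) = (M'*(y \<bullet> u) + m*(x \<bullet> v) - M'*m*W) / W"
    using \<open>0 < W\<close> by (simp_all add: A_B_N_def field_simps)
  ultimately have "N \<le> A*B + (M-A)*(B-m')" "N \<le> A*B + (A-m)*(M'-B)"
    using \<open>0 < W\<close> unfolding A_B_N_def(3) by (simp_all add: divide_right_mono)
  moreover have "F_cr x y u v = N / (A*B)"
    using \<open>0 < W\<close> unfolding F_cr_def A_B_N_def W_def by (simp add: field_simps inner_commute)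
  moreover have "0 < m" "0 < m'"
    using assms by (simp_all add: m_M_m'_M'_def s_minus_pos)
  ultimately show ?thesis
    using le_F_two_point \<open>m \<le> A\<close> \<open>A \<le> M\<close> \<open>m' \<le> B\<close> \<open>B \<le> M'\<close>
    unfolding m_M_m'_M'_def by simp
qed

lemma two_point_realisation:
  assumes "0 < m" "m \<le> M" "0 < m'" "m' \<le> M'" "0 < p" "p < 1"
  defines "x' \<equiv> vector [1, 1] :: real ^ 2" and "y' \<equiv> vector [m, M] :: real ^ 2"
    and "u' \<equiv> vector [p, 1-p] :: real ^ 2" and "v' \<equiv> vector [p*m', (1-p)*M'] :: real ^ 2"
  shows "pos_vec x'" "pos_vec y'" "pos_vec u'" "pos_vec v'"
    and "s_plus x' y' = M" "s_minus x' y' = m" "s_plus u' v' = M'" "s_minus u' v' = m'"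
    and "F_cr x' y' u' v' = F_two_point m M m' M' p"
proof -
  have ratios: "range (\<lambda>i. y' $ i / x' $ i) = {m, M}" "range (\<lambda>i. v' $ i / u' $ i) = {m', M'}"
    using assms by (auto simp: UNIV_2 x'_def y'_def u'_def v'_def)
  show "pos_vec x'" "pos_vec y'" "pos_vec u'" "pos_vec v'"
    using assms by (simp_all add: pos_vec_def forall_2 x'_def y'_def u'_def v'_def)
  show "s_plus x' y' = M" "s_minus x' y' = m" "s_plus u' v' = M'" "s_minus u' v' = m'"
    unfolding s_plus_def s_minus_def ratios using assms(2,4) by simp_all
  show "F_cr x' y' u' v' = F_two_point m M m' M' p"
    by (simp add: F_cr_def F_two_point_def inner_vec_def sum_2 x'_def y'_def u'_def v'_def
        algebra_simps)
qed

theorem mainTheorem8: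
  fixes x y u v :: "real ^ 'd"
  assumes "CARD('d) \<ge> 2"
    and "pos_vec x" and "pos_vec y" and "pos_vec u" and "pos_vec v"
  shows "\<exists>x' y' u' v' :: real ^ 2.
           pos_vec x' \<and> pos_vec y' \<and> pos_vec u' \<and> pos_vec v' \<and>
           s_plus x' y' = s_plus x y \<and> s_minus x' y' = s_minus x y \<and>
           s_plus u' v' = s_plus u v \<and> s_minus u' v' = s_minus u v \<and>
           F_cr x' y' u' v' \<ge> F_cr x y u v"
proof -
  obtain p where p: "0 < p" "p < 1"
    and F: "F_cr x y u v \<le> F_two_point (s_minus x y) (s_plus x y) (s_minus u v) (s_plus u v) p"
    using F_cr_le_F_two_point[OF assms(2-5)] by auto
  note planar = two_point_realisation[OF s_minus_pos[OF assms(2,3)] s_minus_le_s_plus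
      s_minus_pos[OF assms(4,5)] s_minus_le_s_plus p]
  show ?thesis
    using planar F by (intro exI conjI) (auto simp only:)
qed

end
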